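(* Let $\mathbb{M}\subset\mathbb{T}^d$ be Lebesgue measurable with $0<|\mathbb{M}|<|\mathbb{T}^d|$, and suppose (after permuting coordinates) that $\mathbf{e}_1,\dots,\mathbf{e}_m$ ($m\ge1$) generate relevant directions while $\mathbf{e}_{m+1},\dots,\mathbf{e}_d$ generate irrelevant directions. Then there exist signs $s_1,\dots,s_m\in\{+1,-1\}$ and constants $\sigma>0$, $\epsilon_->0$ such that, with $$V=\Big\{(s_1a_1,\dots,s_ma_m,0,\dots,0)\ :\ a_i\ge0,\ \textstyle\sum_{i=1}^m a_i^2=1\Big\},$$ every vector of $V$ generates a relevant direction, and $$\Lambda_{\mathbb{M}}(\mathbf{v})\ge\sigma\|\mathbf{v}\|\quad\text{for every nonzero }\mathbf{v}\in\mathbb{R}^d\text{ with }\mathbf{v}/\|\mathbf{v}\|\in V\text{ and }\|\mathbf{v}\|<\epsilon_- ,$$ where $\|\cdot\|$ is the Euclidean norm.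
   Context: $\mathbb{T}^d=(\mathbb{R}/2\pi\mathbb{Z})^d$ with Lebesgue measure $|\cdot|$, $|\mathbb{T}^d|=(2\pi)^d$. For $\mathbf{a}\in\mathbb{R}^d$, $\mathbb{M}+\mathbf{a}$ is the translate of $\mathbb{M}$ (mod $2\pi$ in each coordinate), and $\Lambda_{\mathbb{M}}(\mathbf{a})=|\mathbb{M}\setminus(\mathbb{M}+\mathbf{a})|$. A vector $\mathbf{a}\in\mathbb{R}^d$ generates an irrelevant direction (with respect to $\mathbb{M}$) if $\Lambda_{\mathbb{M}}(\kappa\mathbf{a})=0$ for all $\kappa\in\mathbb{R}$; otherwise it generates a relevant direction. $\mathbf{e}_i$ denotes the $i$-th standard unit vector of $\mathbb{R}^d$. *)

theory Defs
  imports "HOL-Analysis.Analysis"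
begin

text \<open>The torus T^d = (R/2 pi Z)^d is represented by its fundamental domain
  [0, 2 pi)^d inside real^'n; the dimension d is CARD('n).\<close>

definition torus_dom :: "(real^'n) set" where
  "torus_dom = {x. \<forall>i. 0 \<le> x$i \<and> x$i < 2*pi}"

definition mod2pi :: "real \<Rightarrow> real" where
  "mod2pi t = t - 2*pi * of_int \<lfloor>t / (2*pi)\<rfloor>"

definition torus_translate :: "(real^'n) set \<Rightarrow> real^'n \<Rightarrow> (real^'n) set" where
  "torus_translate M a = (\<lambda>x. \<chi> i. mod2pi (x$i + a$i)) ` M"

definition Lambda :: "(real^'n) set \<Rightarrow> real^'n \<Rightarrow> real" where
  "Lambda M a = measure lebesgue (M - torus_translate M a)"

definition irrelevant_dir :: "(real^'n) set \<Rightarrow> real^'n \<Rightarrow> bool" where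
  "irrelevant_dir M a \<longleftrightarrow> (\<forall>\<kappa>::real. Lambda M (\<kappa> *\<^sub>R a) = 0)"

definition relevant_dir :: "(real^'n) set \<Rightarrow> real^'n \<Rightarrow> bool" where
  "relevant_dir M a \<longleftrightarrow> \<not> irrelevant_dir M a"

end

theory Submission
  imports Defs "HOL-Analysis.Analysis" "HOL-Library.Function_Algebras"
begin

(* The torus is modelled by the fundamental domain D = [0,2pi)^d.  Lifting M to the
   2pi-periodic set P = {y. y mod 2pi \<in> M} turns the torus translate into an ordinary
   translate, so that Lambda M a = |D \<inter> (P - (P + a))|, the "defect" of P at a.  Cutting
   D along lattice cells shows that translating a periodic set does not change the measure
   of its trace on D; from this the defect is subadditive and even, and inner/outer
   regularity of Lebesgue measure makes it small for small a.
   The second half is abstract (locale subadditive_gauge): for a nonnegative, subadditive,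
   even function L that is small near 0, the directions along which L vanishes form a
   subspace W, and on a compact set of unit vectors disjoint from W, L grows at least
   linearly near 0 (compactness plus L(m x) \<le> m L(x)).
   Finally, as no axis e_i (i \<in> R) lies in W, some n orthogonal to W has n_i \<noteq> 0 for
   all i \<in> R; with s_i = sgn n_i every vector of the compact sign cone has positive inner
   product with n, so the cone misses W and the theorem follows. *)

section \<open>Reduction modulo the lattice (2 pi Z)^d\<close>

lemma floor_shift_2pi: "\<lfloor>(t + 2*pi * of_int k) / (2*pi)\<rfloor> = \<lfloor>t / (2*pi)\<rfloor> + k"
proof -
  have "(t + 2*pi * of_int k) / (2*pi) = t / (2*pi) + of_int k" by (simp add: field_simps)
  then show ?thesis by simp
qed

lemma floor_div_2pi_eq_0: "\<lfloor>t / (2*pi)\<rfloor> = 0 \<longleftrightarrow> 0 \<le> t \<and> t < 2*pi"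
proof -
  have "0 < 2*pi" by simp
  then show ?thesis by (simp add: floor_eq_iff divide_less_eq le_divide_eq)
qed

definition lattice_vec :: "('n \<Rightarrow> int) \<Rightarrow> real^'n" where
  "lattice_vec k = (\<chi> i. 2*pi * of_int (k i))"

definition lattice_index :: "real^'n \<Rightarrow> ('n \<Rightarrow> int)" where
  "lattice_index x = (\<lambda>i. \<lfloor>x$i / (2*pi)\<rfloor>)"

definition torus_reduce :: "real^'n \<Rightarrow> real^'n" where
  "torus_reduce x = (\<chi> i. mod2pi (x$i))"

lemma lattice_vec_minus: "lattice_vec (- k) = - lattice_vec k"
  by (simp add: lattice_vec_def vec_eq_iff)

lemma lattice_index_shift: "lattice_index (x + lattice_vec k) = lattice_index x + k"
  by (simp add: lattice_index_def lattice_vec_def fun_eq_iff floor_shift_2pi)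

lemma lattice_index_eq_0_iff: "lattice_index x = 0 \<longleftrightarrow> x \<in> torus_dom"
  by (simp add: lattice_index_def torus_dom_def fun_eq_iff floor_div_2pi_eq_0)

lemma lattice_index_eq_iff: "lattice_index x = k \<longleftrightarrow> x - lattice_vec k \<in> torus_dom"
proof -
  have "lattice_index (x - lattice_vec k) = lattice_index x - k"
    using lattice_index_shift[of x "- k"] by (simp add: lattice_vec_minus)
  then show ?thesis by (simp flip: lattice_index_eq_0_iff)
qed

lemma torus_reduce_eq: "torus_reduce x = x - lattice_vec (lattice_index x)"
  by (simp add: torus_reduce_def lattice_vec_def lattice_index_def vec_eq_iff mod2pi_def)

lemma torus_reduce_in_dom: "torus_reduce x \<in> torus_dom"
  unfolding torus_reduce_eq using lattice_index_eq_iff by blast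

lemma torus_reduce_id: "x \<in> torus_dom \<Longrightarrow> torus_reduce x = x"
  by (simp add: torus_reduce_eq lattice_index_eq_0_iff[symmetric] lattice_vec_def vec_eq_iff)

lemma torus_reduce_shift: "torus_reduce (x + lattice_vec k) = torus_reduce x"
  unfolding torus_reduce_eq lattice_index_shift by (simp add: lattice_vec_def vec_eq_iff algebra_simps)

lemma torus_reduce_add: "torus_reduce (torus_reduce x + c) = torus_reduce (x + c)"
proof -
  have "torus_reduce x + c = (x + c) + lattice_vec (- lattice_index x)"
    by (simp add: torus_reduce_eq lattice_vec_minus)
  then show ?thesis by (simp only: torus_reduce_shift)
qed

definition lattice_periodic :: "(real^'n) set \<Rightarrow> bool" where
  "lattice_periodic Q \<longleftrightarrow> (\<forall>x. x \<in> Q \<longleftrightarrow> torus_reduce x \<in> Q)"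

definition periodic_lift :: "(real^'n) set \<Rightarrow> (real^'n) set" where
  "periodic_lift M = {y. torus_reduce y \<in> M}"

lemma lattice_periodic_translate: "lattice_periodic Q \<Longrightarrow> lattice_periodic {x. x - a \<in> Q}"
  unfolding lattice_periodic_def
  by (metis mem_Collect_eq torus_reduce_add[of _ "- a"] diff_conv_add_uminus)

lemma lattice_periodic_Int: "lattice_periodic Q \<Longrightarrow> lattice_periodic Q' \<Longrightarrow> lattice_periodic (Q \<inter> Q')"
  unfolding lattice_periodic_def by blast

lemma lattice_periodic_Diff: "lattice_periodic Q \<Longrightarrow> lattice_periodic Q' \<Longrightarrow> lattice_periodic (Q - Q')"
  unfolding lattice_periodic_def by blast

lemma lattice_periodic_lattice_vec: "lattice_periodic Q \<Longrightarrow> x + lattice_vec k \<in> Q \<longleftrightarrow> x \<in> Q"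
  unfolding lattice_periodic_def by (metis torus_reduce_shift)

lemma lattice_periodic_lift: "lattice_periodic (periodic_lift M)"
  unfolding lattice_periodic_def periodic_lift_def by (simp add: torus_reduce_id torus_reduce_in_dom)

lemma lebesgue_translate_measurable: "Q \<in> sets lebesgue \<Longrightarrow> {x. x - a \<in> Q} \<in> sets lebesgue"
proof -
  assume "Q \<in> sets lebesgue"
  moreover have "{x. x - a \<in> Q} = (+) a ` Q" by (force simp: algebra_simps)
  ultimately show ?thesis using lebesgue_sets_translation by metis
qed

lemma torus_dom_measurable: "torus_dom \<in> sets lebesgue"
proof -
  have "torus_dom \<in> sets borel" unfolding torus_dom_def by measurable
  then show ?thesis by auto
qed

lemma lattice_cell_measurable: "{x. lattice_index (x + c) = k} \<in> sets lebesgue"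
proof -
  have "{x. lattice_index (x + c) = k} = {x. x - (lattice_vec k - c) \<in> torus_dom}"
    by (simp add: lattice_index_eq_iff algebra_simps)
  then show ?thesis using lebesgue_translate_measurable[OF torus_dom_measurable] by simp
qed

lemma periodic_lift_eq_UN:
  assumes "M \<subseteq> torus_dom"
  shows "periodic_lift M = (\<Union>k. (+) (lattice_vec k) ` M)"
proof (rule set_eqI, rule iffI)
  fix x assume "x \<in> periodic_lift M"
  then show "x \<in> (\<Union>k. (+) (lattice_vec k) ` M)"
    unfolding periodic_lift_def using torus_reduce_eq[of x]
    by (auto intro!: exI[of _ "lattice_index x"] image_eqI[of _ _ "torus_reduce x"])
next
  fix x assume "x \<in> (\<Union>k. (+) (lattice_vec k) ` M)"
  then obtain k m where "m \<in> M" "x = lattice_vec k + m" by auto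
  then show "x \<in> periodic_lift M" unfolding periodic_lift_def
    using assms torus_reduce_shift[of m k] torus_reduce_id[of m] by (auto simp: add.commute)
qed

lemma periodic_lift_measurable:
  assumes "M \<subseteq> torus_dom" and "M \<in> sets lebesgue"
  shows "periodic_lift M \<in> sets lebesgue"
  unfolding periodic_lift_eq_UN[OF assms(1)]
  by (rule sets.countable_UN') (use assms(2) in \<open>auto intro: lebesgue_sets_translation\<close>)

lemma bounded_torus_dom: "bounded torus_dom"
proof -
  have "torus_dom \<subseteq> cbox (0::real^'n) (\<chi> i. 2*pi)"
    by (auto simp: torus_dom_def mem_box_cart less_imp_le)
  then show ?thesis using bounded_cbox bounded_subset by blast
qed

lemma torus_dom_subset_lmeasurable: "S \<subseteq> torus_dom \<Longrightarrow> S \<in> sets lebesgue \<Longrightarrow> S \<in> lmeasurable"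
  using bounded_torus_dom bounded_subset bounded_set_imp_lmeasurable by blast

section \<open>Translating a periodic set preserves the measure of its trace on the domain\<close>

lemma emeasure_split_by_index:
  fixes f :: "'a \<Rightarrow> 'k::countable"
  assumes "\<And>k. {x \<in> S. f x = k} \<in> sets M"
  shows "emeasure M S = (\<integral>\<^sup>+k. emeasure M {x \<in> S. f x = k} \<partial>count_space UNIV)"
proof -
  have "emeasure M (\<Union>k. {x \<in> S. f x = k}) = (\<integral>\<^sup>+k. emeasure M {x \<in> S. f x = k} \<partial>count_space UNIV)"
    by (rule emeasure_UN_countable) (auto simp: assms disjoint_family_on_def)
  moreover have "(\<Union>k. {x \<in> S. f x = k}) = S" by blast
  ultimately show ?thesis by (simp only:)
qed

lemma periodic_translate_pieces:
  assumes per: "lattice_periodic Q"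
  shows "{x \<in> torus_dom \<inter> {x. x - a \<in> Q}. - lattice_index (x - a) = k}
       = (+) (a - lattice_vec k) ` {y \<in> torus_dom \<inter> Q. lattice_index (y + a) = k}"
    (is "?A = ?B")
proof (rule set_eqI, rule iffI)
  fix x assume "x \<in> ?A"
  then have x: "x \<in> torus_dom" "x - a \<in> Q" "lattice_index (x - a) = - k" by auto
  define y where "y = x - a + lattice_vec k"
  have "y = torus_reduce (x - a)"
    by (simp add: y_def torus_reduce_eq x(3) lattice_vec_minus)
  then have "y \<in> torus_dom" "y \<in> Q"
    using x(2) per torus_reduce_in_dom unfolding lattice_periodic_def by auto
  moreover have "lattice_index (y + a) = k"
  proof -
    have "y + a = x + lattice_vec k" by (simp add: y_def)
    then show ?thesis using lattice_index_shift[of x k] lattice_index_eq_0_iff[THEN iffD2, OF x(1)] by simp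
  qed
  moreover have "x = (a - lattice_vec k) + y" by (simp add: y_def)
  ultimately show "x \<in> ?B" by blast
next
  fix x assume "x \<in> ?B"
  then obtain y where y: "y \<in> torus_dom" "y \<in> Q" "lattice_index (y + a) = k"
    and x: "x = a - lattice_vec k + y" by auto
  have "x - a = y + lattice_vec (- k)" using x by (simp add: lattice_vec_minus)
  then have "x - a \<in> Q" "lattice_index (x - a) = - k"
    using y(1,2) lattice_periodic_lattice_vec[OF per] lattice_index_shift[of y "- k"]
      lattice_index_eq_0_iff[of y] by auto
  moreover have "x \<in> torus_dom"
  proof -
    have "x = (y + a) - lattice_vec k" using x by simp
    then show ?thesis using y(3) lattice_index_eq_iff[of "y + a" k] by simp
  qed
  ultimately show "x \<in> ?A" by simp
qed

text \<open>The key invariance: summing the measures of these pieces over all k shows that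
  translating a periodic set does not change the measure of its trace on D.\<close>
lemma periodic_translate_emeasure:
  assumes per: "lattice_periodic Q" and Q_meas: "Q \<in> sets lebesgue"
  shows "emeasure lebesgue (torus_dom \<inter> {x. x - a \<in> Q}) = emeasure lebesgue (torus_dom \<inter> Q)"
proof -
  define A where "A k = {x \<in> torus_dom \<inter> {x. x - a \<in> Q}. - lattice_index (x - a) = k}" for k
  define B where "B k = {y \<in> torus_dom \<inter> Q. lattice_index (y + a) = k}" for k
  have A_eq: "A k = (+) (a - lattice_vec k) ` B k" for k
    unfolding A_def B_def by (rule periodic_translate_pieces[OF per])
  have B_meas: "B k \<in> sets lebesgue" for k
  proof -
    have "B k = torus_dom \<inter> Q \<inter> {y. lattice_index (y + a) = k}" unfolding B_def by blast
    then show ?thesis by (simp add: sets.Int torus_dom_measurable Q_meas lattice_cell_measurable)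
  qed
  have A_meas: "A k \<in> sets lebesgue" for k
    unfolding A_eq by (rule lebesgue_sets_translation[OF B_meas])
  have "emeasure lebesgue (torus_dom \<inter> {x. x - a \<in> Q}) = (\<integral>\<^sup>+k. emeasure lebesgue (A k) \<partial>count_space UNIV)"
    unfolding A_def using A_meas[unfolded A_def] by (rule emeasure_split_by_index)
  also have "\<dots> = (\<integral>\<^sup>+k. emeasure lebesgue (B k) \<partial>count_space UNIV)"
    using emeasure_lebesgue_affine[of 1 "a - lattice_vec _"] by (simp add: A_eq add.commute)
  also have "\<dots> = emeasure lebesgue (torus_dom \<inter> Q)"
    unfolding B_def using B_meas[unfolded B_def] by (rule emeasure_split_by_index[symmetric])
  finally show ?thesis .
qed

lemma periodic_translate_measure:
  "lattice_periodic Q \<Longrightarrow> Q \<in> sets lebesgue \<Longrightarrow>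
   measure lebesgue (torus_dom \<inter> {x. x - a \<in> Q}) = measure lebesgue (torus_dom \<inter> Q)"
  unfolding measure_def by (simp add: periodic_translate_emeasure)

section \<open>The defect of a periodic set and the function Lambda\<close>

definition defect :: "(real^'n) set \<Rightarrow> real^'n \<Rightarrow> (real^'n) set" where
  "defect Q a = torus_dom \<inter> (Q - {x. x - a \<in> Q})"

lemma torus_translate_reduce: "torus_translate M a = (\<lambda>x. torus_reduce (x + a)) ` M"
  by (simp add: torus_translate_def torus_reduce_def)

lemma torus_translate_eq:
  assumes "M \<subseteq> torus_dom"
  shows "torus_translate M a = torus_dom \<inter> {x. x - a \<in> periodic_lift M}"
proof (rule set_eqI, rule iffI)
  fix x assume "x \<in> torus_translate M a"
  then obtain m where m: "m \<in> M" "x = torus_reduce (m + a)"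
    unfolding torus_translate_reduce by auto
  have "torus_reduce (x - a) = m"
    using m assms torus_reduce_add[of "m + a" "- a"] torus_reduce_id by auto
  then show "x \<in> torus_dom \<inter> {x. x - a \<in> periodic_lift M}"
    using m torus_reduce_in_dom by (auto simp: periodic_lift_def)
next
  fix x assume x: "x \<in> torus_dom \<inter> {x. x - a \<in> periodic_lift M}"
  have "x = torus_reduce (torus_reduce (x - a) + a)"
    using x torus_reduce_add[of "x - a" a] torus_reduce_id[of x] by auto
  then show "x \<in> torus_translate M a"
    using x unfolding torus_translate_reduce periodic_lift_def by auto
qed

lemma Lambda_eq_defect:
  assumes "M \<subseteq> torus_dom"
  shows "Lambda M a = measure lebesgue (defect (periodic_lift M) a)"
proof -
  have "M = torus_dom \<inter> periodic_lift M"
  proof (rule set_eqI)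
    fix x show "x \<in> M \<longleftrightarrow> x \<in> torus_dom \<inter> periodic_lift M"
      using assms torus_reduce_id[of x] by (auto simp: periodic_lift_def)
  qed
  then have "M - torus_translate M a = defect (periodic_lift M) a"
    unfolding torus_translate_eq[OF assms] defect_def by blast
  then show ?thesis unfolding Lambda_def by simp
qed

lemma defect_lmeasurable: "Q \<in> sets lebesgue \<Longrightarrow> defect Q a \<in> lmeasurable"
  unfolding defect_def
  by (rule torus_dom_subset_lmeasurable)
     (auto intro!: sets.Int sets.Diff torus_dom_measurable lebesgue_translate_measurable)

text \<open>Subadditivity: a point of Q missed by Q + (a + b) is missed either by Q + a or,
  after translation by a, by Q + b; the latter set has the measure of the defect at b
  by translation invariance.\<close>
lemma defect_subadditive:
  assumes per: "lattice_periodic Q" and Q_meas: "Q \<in> sets lebesgue"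
  shows "measure lebesgue (defect Q (a + b)) \<le> measure lebesgue (defect Q a) + measure lebesgue (defect Q b)"
proof -
  define X where "X = torus_dom \<inter> {x. x - a \<in> Q - {y. y - b \<in> Q}}"
  have X_meas: "X \<in> lmeasurable" unfolding X_def
    by (rule torus_dom_subset_lmeasurable, blast, rule sets.Int[OF torus_dom_measurable
        lebesgue_translate_measurable[OF sets.Diff[OF Q_meas lebesgue_translate_measurable[OF Q_meas]]]])
  have "defect Q (a + b) \<subseteq> defect Q a \<union> X"
    unfolding defect_def X_def by (auto simp: algebra_simps)
  then have "measure lebesgue (defect Q (a + b)) \<le> measure lebesgue (defect Q a \<union> X)"
    by (rule measure_mono_fmeasurable) (use defect_lmeasurable[OF Q_meas] X_meas in auto)
  also have "\<dots> \<le> measure lebesgue (defect Q a) + measure lebesgue X"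
    by (rule measure_Un_le) (use defect_lmeasurable[OF Q_meas] X_meas in auto)
  also have "measure lebesgue X = measure lebesgue (defect Q b)"
    unfolding X_def defect_def
    by (rule periodic_translate_measure)
       (auto intro!: lattice_periodic_Diff lattice_periodic_translate per sets.Diff
         lebesgue_translate_measurable Q_meas)
  finally show ?thesis .
qed

text \<open>Symmetry: the defect at a is the part of D \<inter> Q outside the overlap of Q and
  Q + a; translating the overlap by -a gives the overlap of Q and Q - a.\<close>
lemma defect_symmetric:
  assumes per: "lattice_periodic Q" and Q_meas: "Q \<in> sets lebesgue"
  shows "measure lebesgue (defect Q (- a)) = measure lebesgue (defect Q a)"
proof -
  define K where "K c = torus_dom \<inter> Q \<inter> {x. x - c \<in> Q}" for c
  have K_meas: "K c \<in> sets lebesgue" for c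
    unfolding K_def by (auto intro!: sets.Int torus_dom_measurable lebesgue_translate_measurable Q_meas)
  have DQ_meas: "torus_dom \<inter> Q \<in> lmeasurable"
    by (rule torus_dom_subset_lmeasurable) (auto intro!: sets.Int torus_dom_measurable Q_meas)
  have defect_K: "measure lebesgue (defect Q c) = measure lebesgue (torus_dom \<inter> Q) - measure lebesgue (K c)" for c
  proof -
    have "defect Q c = (torus_dom \<inter> Q) - K c" unfolding defect_def K_def by auto
    moreover have "measure lebesgue ((torus_dom \<inter> Q) - K c) = measure lebesgue (torus_dom \<inter> Q) - measure lebesgue (K c)"
      by (rule measure_Diff) (use DQ_meas K_meas in \<open>auto simp: K_def fmeasurable_def\<close>)
    ultimately show ?thesis by simp
  qed
  have "K a = torus_dom \<inter> {x. x - a \<in> Q \<inter> {y. y - (- a) \<in> Q}}" unfolding K_def by auto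
  then have "measure lebesgue (K a) = measure lebesgue (torus_dom \<inter> (Q \<inter> {y. y - (- a) \<in> Q}))"
    by (simp only: periodic_translate_measure[OF lattice_periodic_Int[OF per lattice_periodic_translate[OF per]]
          sets.Int[OF Q_meas lebesgue_translate_measurable[OF Q_meas]]])
  also have "\<dots> = measure lebesgue (K (- a))" unfolding K_def by (simp add: Int_assoc)
  finally show ?thesis using defect_K by simp
qed

text \<open>Approximate E from inside by a compact set T and from
  outside by an open set U; a point of E - (y + E) lies in E - T or in y + (U - E) once y
  is shorter than the distance from T to the complement of U.\<close>
lemma translate_defect_small:
  fixes E :: "'a::euclidean_space set"
  assumes E_meas: "E \<in> sets lebesgue" and "bounded E" and "\<delta> > 0"
  shows "\<exists>r>0. \<forall>y. norm y < r \<longrightarrow> measure lebesgue (E - (+) y ` E) \<le> \<delta>"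
proof -
  have half: "\<delta>/2 > 0" using \<open>\<delta> > 0\<close> by simp
  obtain T where T: "closed T" "T \<subseteq> E" "E - T \<in> lmeasurable" "emeasure lebesgue (E - T) < ennreal (\<delta>/2)"
    using sets_lebesgue_inner_closed[OF E_meas half] by blast
  obtain U where U: "open U" "E \<subseteq> U" "U - E \<in> lmeasurable" "emeasure lebesgue (U - E) < ennreal (\<delta>/2)"
    using sets_lebesgue_outer_open[OF E_meas half] by blast
  have "compact T"
    using T(1,2) \<open>bounded E\<close> bounded_subset compact_eq_bounded_closed by blast
  then obtain e where e: "e > 0" "(\<Union>x\<in>T. ball x e) \<subseteq> U"
    using compact_subset_open_imp_ball_epsilon_subset[OF _ U(1)] T(2) U(2) by blast
  show ?thesis
  proof (intro exI[of _ e] conjI allI impI)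
    show "0 < e" by (rule e(1))
  next
    fix y :: 'a assume y: "norm y < e"
    have "E - (+) y ` E \<subseteq> (E - T) \<union> (+) y ` (U - E)"
    proof
      fix x assume x: "x \<in> E - (+) y ` E"
      show "x \<in> (E - T) \<union> (+) y ` (U - E)"
      proof (cases "x \<in> T")
        case True
        then have "x - y \<in> U" using e y by (force simp: dist_norm)
        moreover have "x - y \<notin> E" using x by (metis add_diff_cancel_left' diff_add_cancel image_eqI DiffD2 add.commute)
        ultimately show ?thesis by (auto intro: image_eqI[of _ _ "x - y"])
      qed (use x in auto)
    qed
    then have "emeasure lebesgue (E - (+) y ` E) \<le> emeasure lebesgue ((E - T) \<union> (+) y ` (U - E))"
      by (rule emeasure_mono) (use T U in \<open>auto intro!: lebesgue_sets_translation\<close>)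
    also have "\<dots> \<le> emeasure lebesgue (E - T) + emeasure lebesgue ((+) y ` (U - E))"
      by (rule emeasure_subadditive) (use T U in \<open>auto intro!: lebesgue_sets_translation\<close>)
    also have "emeasure lebesgue ((+) y ` (U - E)) = emeasure lebesgue (U - E)"
      using emeasure_lebesgue_affine[of 1 y "U - E"] by (simp add: add.commute)
    also have "emeasure lebesgue (E - T) + emeasure lebesgue (U - E) \<le> ennreal (\<delta>/2) + ennreal (\<delta>/2)"
      using T(4) U(4) by (intro add_mono) auto
    also have "\<dots> = ennreal \<delta>" using \<open>\<delta> > 0\<close> by (simp flip: ennreal_plus)
    finally show "measure lebesgue (E - (+) y ` E) \<le> \<delta>"
      unfolding measure_def using \<open>\<delta> > 0\<close> by (intro enn2real_leI) auto
  qed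
qed

lemma defect_small:
  assumes Q_meas: "Q \<in> sets lebesgue" and "\<delta> > 0"
  shows "\<exists>r>0. \<forall>y. norm y < r \<longrightarrow> measure lebesgue (defect Q y) \<le> \<delta>"
proof -
  define E where "E = torus_dom \<inter> Q"
  have E_meas: "E \<in> sets lebesgue" unfolding E_def using Q_meas torus_dom_measurable by auto
  have "bounded E" unfolding E_def using bounded_torus_dom by auto
  then obtain r where r: "r > 0" "\<forall>y. norm y < r \<longrightarrow> measure lebesgue (E - (+) y ` E) \<le> \<delta>"
    using translate_defect_small[OF E_meas _ \<open>\<delta> > 0\<close>] by blast
  have "measure lebesgue (defect Q y) \<le> measure lebesgue (E - (+) y ` E)" for y
  proof (rule measure_mono_fmeasurable)
    show "defect Q y \<subseteq> E - (+) y ` E" unfolding defect_def E_def by auto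
    show "E - (+) y ` E \<in> fmeasurable lebesgue" unfolding E_def
      by (rule torus_dom_subset_lmeasurable)
         (auto intro!: sets.Diff sets.Int lebesgue_sets_translation torus_dom_measurable Q_meas)
    show "defect Q y \<in> sets lebesgue" using defect_lmeasurable[OF Q_meas] by (rule fmeasurableD)
  qed
  then show ?thesis using r by (meson order_trans)
qed

section \<open>Nonnegative, subadditive, even functions that are small near the origin\<close>

lemma floor_multiple_bounds:
  fixes t \<tau> :: real
  assumes "0 < t" and "0 < \<tau>"
  shows "\<tau> - t < real (nat \<lfloor>\<tau> / t\<rfloor>) * t \<and> real (nat \<lfloor>\<tau> / t\<rfloor>) * t \<le> \<tau>"
proof -
  have "real (nat \<lfloor>\<tau> / t\<rfloor>) = of_int \<lfloor>\<tau> / t\<rfloor>" using assms by simp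
  moreover have "of_int \<lfloor>\<tau> / t\<rfloor> * t \<le> \<tau>"
    using of_int_floor_le[of "\<tau> / t"] \<open>0 < t\<close> by (simp add: le_divide_eq)
  moreover have "\<tau> < (of_int \<lfloor>\<tau> / t\<rfloor> + 1) * t"
    using real_of_int_floor_add_one_gt[of "\<tau> / t"] unfolding pos_divide_less_eq[OF \<open>0 < t\<close>] .
  ultimately show ?thesis by (simp add: algebra_simps)
qed

lemma floor_multiples_tendsto:
  fixes t :: "nat \<Rightarrow> real"
  assumes t_pos: "\<And>j. 0 < t j" and t_lim: "t \<longlonglongrightarrow> 0" and "0 < \<tau>"
  shows "(\<lambda>j. real (nat \<lfloor>\<tau> / t j\<rfloor>) * t j) \<longlonglongrightarrow> \<tau>"
proof (rule tendsto_sandwich[of "\<lambda>j. \<tau> - t j" _ _ "\<lambda>j. \<tau>"])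
  show "\<forall>\<^sub>F j in sequentially. \<tau> - t j \<le> real (nat \<lfloor>\<tau> / t j\<rfloor>) * t j"
    using floor_multiple_bounds[OF t_pos \<open>0 < \<tau>\<close>] by (auto intro: always_eventually less_imp_le)
  show "\<forall>\<^sub>F j in sequentially. real (nat \<lfloor>\<tau> / t j\<rfloor>) * t j \<le> \<tau>"
    using floor_multiple_bounds[OF t_pos \<open>0 < \<tau>\<close>] by (auto intro: always_eventually)
  show "(\<lambda>j. \<tau> - t j) \<longlonglongrightarrow> \<tau>" using tendsto_diff[OF tendsto_const t_lim, of \<tau>] by simp
qed simp

locale subadditive_gauge =
  fixes L :: "'a::real_normed_vector \<Rightarrow> real"
  assumes nonneg: "\<And>a. 0 \<le> L a"
    and subadditive: "\<And>a b. L (a + b) \<le> L a + L b"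
    and symmetric: "\<And>a. L (- a) = L a"
    and small_near_zero: "\<And>\<delta>. \<delta> > 0 \<Longrightarrow> \<exists>r>0. \<forall>y. norm y < r \<longrightarrow> L y \<le> \<delta>"
begin

lemma at_zero: "L 0 = 0"
proof -
  have "L 0 \<le> \<delta>" if "\<delta> > 0" for \<delta> using small_near_zero[OF that] by auto
  then have "L 0 \<le> 0" by (meson dense not_le)
  then show ?thesis using nonneg[of 0] by simp
qed

text \<open>By subadditivity and symmetry, |L x - L y| \<le> L (x - y); so smallness near the
  origin makes L continuous everywhere.\<close>
lemma continuous: "isCont L x"
  unfolding continuous_at_eps_delta
proof (intro allI impI)
  fix e :: real assume "e > 0"
  then obtain r where r: "r > 0" "\<forall>y. norm y < r \<longrightarrow> L y \<le> e/2"
    using small_near_zero[of "e/2"] by auto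
  have difference_bound: "\<bar>L y - L x\<bar> \<le> L (y - x)" for y
  proof -
    have "L y \<le> L x + L (y - x)" using subadditive[of x "y - x"] by simp
    moreover have "L x \<le> L y + L (y - x)"
      using subadditive[of y "x - y"] symmetric[of "y - x"] by simp
    ultimately show ?thesis by linarith
  qed
  show "\<exists>d>0. \<forall>y. dist y x < d \<longrightarrow> dist (L y) (L x) < e"
  proof (intro exI[of _ r] conjI allI impI)
    fix y assume "dist y x < r"
    then have "L (y - x) \<le> e/2" using r(2) by (simp add: dist_norm)
    then show "dist (L y) (L x) < e" using difference_bound[of y] \<open>e > 0\<close> by (simp add: dist_real_def)
  qed (rule r(1))
qed

lemma scale_nat: "L (real m *\<^sub>R x) \<le> real m * L x"
proof (induction m)
  case 0 then show ?case using at_zero by simp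
next
  case (Suc m)
  have "L (real (Suc m) *\<^sub>R x) = L (x + real m *\<^sub>R x)" by (simp add: algebra_simps)
  also have "\<dots> \<le> L x + L (real m *\<^sub>R x)" by (rule subadditive)
  finally show ?case using Suc by (simp add: algebra_simps)
qed

definition null_dirs :: "'a set" where
  "null_dirs = {a. \<forall>\<kappa>. L (\<kappa> *\<^sub>R a) = 0}"

lemma subspace_null_dirs: "subspace null_dirs"
  unfolding subspace_def null_dirs_def
proof (intro conjI ballI allI CollectI)
  show "L (\<kappa> *\<^sub>R 0) = 0" for \<kappa> using at_zero by simp
next
  fix x y \<kappa> assume x: "x \<in> {a. \<forall>\<kappa>. L (\<kappa> *\<^sub>R a) = 0}" and y: "y \<in> {a. \<forall>\<kappa>. L (\<kappa> *\<^sub>R a) = 0}"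
  have "L (\<kappa> *\<^sub>R (x + y)) \<le> L (\<kappa> *\<^sub>R x) + L (\<kappa> *\<^sub>R y)"
    using subadditive by (simp add: scaleR_right_distrib)
  then show "L (\<kappa> *\<^sub>R (x + y)) = 0" using x y nonneg[of "\<kappa> *\<^sub>R (x + y)"] by simp
next
  fix c x \<kappa> assume "x \<in> {a. \<forall>\<kappa>. L (\<kappa> *\<^sub>R a) = 0}"
  then show "L (\<kappa> *\<^sub>R c *\<^sub>R x) = 0" by simp
qed

text \<open>If L(t_j u_j) = o(t_j) along t_j \<rightarrow> 0 and u_j \<rightarrow> l, then L vanishes on the line
  through l: for \<tau> > 0 the points m_j t_j u_j with m_j = \<lfloor>\<tau>/t_j\<rfloor> tend to \<tau> l, while by
  subadditivity L(m_j t_j u_j) \<le> m_j L(t_j u_j) = o(1).\<close>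
lemma null_dir_of_sublinear_sequence:
  assumes t_pos: "\<And>j. 0 < t j" and t_lim: "t \<longlonglongrightarrow> 0" and u_lim: "u \<longlonglongrightarrow> l"
    and sublinear: "\<And>j. L (t j *\<^sub>R u j) \<le> e j * t j" and e_lim: "e \<longlonglongrightarrow> 0"
  shows "l \<in> null_dirs"
proof -
  have positive_scale: "L (\<tau> *\<^sub>R l) = 0" if "\<tau> > 0" for \<tau>
  proof -
    define m where "m j = nat \<lfloor>\<tau> / t j\<rfloor>" for j
    have m_le: "real (m j) * t j \<le> \<tau>" for j
      using floor_multiple_bounds[OF t_pos \<open>0 < \<tau>\<close>] by (simp add: m_def)
    have "(\<lambda>j. real (m j) * t j) \<longlonglongrightarrow> \<tau>"
      unfolding m_def using t_pos t_lim \<open>0 < \<tau>\<close> by (rule floor_multiples_tendsto)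
    then have "(\<lambda>j. (real (m j) * t j) *\<^sub>R u j) \<longlonglongrightarrow> \<tau> *\<^sub>R l"
      using u_lim by (rule tendsto_scaleR)
    then have "(\<lambda>j. L ((real (m j) * t j) *\<^sub>R u j)) \<longlonglongrightarrow> L (\<tau> *\<^sub>R l)"
      by (rule isCont_tendsto_compose[OF continuous])
    moreover have "(\<lambda>j. \<tau> * e j) \<longlonglongrightarrow> 0" using tendsto_mult_right_zero[OF e_lim] by simp
    moreover have "L ((real (m j) * t j) *\<^sub>R u j) \<le> \<tau> * e j" for j
    proof -
      have "0 \<le> e j * t j" using nonneg[of "t j *\<^sub>R u j"] sublinear[of j] by (rule order_trans)
      then have e_nonneg: "0 \<le> e j" using t_pos[of j] by (simp add: zero_le_mult_iff)
      have "L ((real (m j) * t j) *\<^sub>R u j) \<le> real (m j) * L (t j *\<^sub>R u j)"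
        using scale_nat[of "m j" "t j *\<^sub>R u j"] by simp
      also have "\<dots> \<le> real (m j) * (e j * t j)" by (simp add: mult_left_mono sublinear)
      also have "\<dots> = e j * (real (m j) * t j)" by simp
      also have "\<dots> \<le> e j * \<tau>" using m_le[of j] e_nonneg by (simp add: mult_left_mono)
      finally show ?thesis by (simp add: mult.commute)
    qed
    ultimately have "L (\<tau> *\<^sub>R l) \<le> 0" by (blast intro: LIMSEQ_le)
    then show ?thesis using nonneg[of "\<tau> *\<^sub>R l"] by simp
  qed
  have "L (\<kappa> *\<^sub>R l) = 0" for \<kappa>
  proof (cases \<kappa> "0::real" rule: linorder_cases)
    case less
    then show ?thesis using positive_scale[of "- \<kappa>"] symmetric[of "\<kappa> *\<^sub>R l"] by simp
  qed (use at_zero positive_scale in auto)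
  then show ?thesis unfolding null_dirs_def by simp
qed

text \<open>On a compact set of unit directions avoiding the null directions, L grows at least
  linearly near the origin; otherwise a sequence violating this would produce, by
  compactness, a null direction in the set.\<close>
lemma uniform_linear_lower_bound:
  assumes "compact K" and K_null: "K \<inter> null_dirs = {}"
  shows "\<exists>\<sigma>>0. \<exists>\<epsilon>>0. \<forall>v. v \<noteq> 0 \<and> v /\<^sub>R norm v \<in> K \<and> norm v < \<epsilon> \<longrightarrow> \<sigma> * norm v \<le> L v"
proof (rule ccontr)
  assume no_bound: "\<not> ?thesis"
  have "\<forall>j. \<exists>v. v \<noteq> 0 \<and> v /\<^sub>R norm v \<in> K \<and> norm v < inverse (real (Suc j)) \<and>
                L v < inverse (real (Suc j)) * norm v"
  proof
    fix j :: nat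
    have "inverse (real (Suc j)) > 0" by simp
    then show "\<exists>v. v \<noteq> 0 \<and> v /\<^sub>R norm v \<in> K \<and> norm v < inverse (real (Suc j)) \<and>
                L v < inverse (real (Suc j)) * norm v"
      using no_bound by (meson not_le)
  qed
  then have "\<exists>v. \<forall>j. v j \<noteq> 0 \<and> v j /\<^sub>R norm (v j) \<in> K \<and> norm (v j) < inverse (real (Suc j)) \<and>
                L (v j) < inverse (real (Suc j)) * norm (v j)"
    by (rule choice)
  then obtain v where v: "\<And>j. v j \<noteq> 0" "\<And>j. v j /\<^sub>R norm (v j) \<in> K"
      "\<And>j. norm (v j) < inverse (real (Suc j))" "\<And>j. L (v j) < inverse (real (Suc j)) * norm (v j)"
    by blast
  define u where "u j = v j /\<^sub>R norm (v j)" for j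
  have u_K: "u j \<in> K" for j unfolding u_def by (rule v(2))
  obtain l r where l: "l \<in> K" "strict_mono r" "(u \<circ> r) \<longlonglongrightarrow> l"
    using compact_imp_seq_compact[OF \<open>compact K\<close>] u_K unfolding seq_compact_def by metis
  have norm_lim: "(\<lambda>j. norm (v j)) \<longlonglongrightarrow> 0"
    by (rule Lim_null_comparison[OF _ LIMSEQ_inverse_real_of_nat])
       (use v(3) in \<open>auto intro: always_eventually less_imp_le\<close>)
  have "l \<in> null_dirs"
  proof (rule null_dir_of_sublinear_sequence)
    show "0 < norm (v (r j))" for j using v(1) by simp
    show "(\<lambda>j. norm (v (r j))) \<longlonglongrightarrow> 0"
      using LIMSEQ_subseq_LIMSEQ[OF norm_lim l(2)] by (simp add: o_def)
    show "(u \<circ> r) \<longlonglongrightarrow> l" by (rule l(3))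
    show "L (norm (v (r j)) *\<^sub>R (u \<circ> r) j) \<le> inverse (real (Suc (r j))) * norm (v (r j))" for j
      using v(1)[of "r j"] less_imp_le[OF v(4)[of "r j"]] by (simp add: u_def)
    show "(\<lambda>j. inverse (real (Suc (r j)))) \<longlonglongrightarrow> 0"
      using LIMSEQ_subseq_LIMSEQ[OF LIMSEQ_inverse_real_of_nat l(2)] by (simp add: o_def)
  qed
  then show False using l(1) K_null by blast
qed

end

lemma Lambda_subadditive_gauge:
  assumes "M \<subseteq> torus_dom" and "M \<in> sets lebesgue"
  shows "subadditive_gauge (Lambda M)"
proof -
  have per: "lattice_periodic (periodic_lift M)" by (rule lattice_periodic_lift)
  have meas: "periodic_lift M \<in> sets lebesgue" using assms by (rule periodic_lift_measurable)
  show ?thesis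
    by unfold_locales
       (simp_all add: Lambda_eq_defect[OF assms(1)] defect_subadditive[OF per meas]
         defect_symmetric[OF per meas] defect_small[OF meas])
qed

text \<open>If e_k \<notin> W, the component of e_k orthogonal to W has nonzero k-th coordinate.\<close>
lemma orthogonal_vector_with_coordinate:
  fixes W :: "(real^'n) set"
  assumes "subspace W" and "axis k 1 \<notin> W"
  shows "\<exists>g. (\<forall>w\<in>W. g \<bullet> w = 0) \<and> g$k \<noteq> 0"
proof -
  obtain y z where yz: "y \<in> span W" "\<And>w. w \<in> span W \<Longrightarrow> orthogonal z w" "axis k 1 = y + z"
    using orthogonal_subspace_decomp_exists by metis
  have span_W: "span W = W" using assms(1) span_eq_iff by blast
  have "z \<noteq> 0" using yz assms(2) span_W by auto
  have "z$k = z \<bullet> axis k 1" by (simp add: cart_eq_inner_axis)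
  also have "\<dots> = z \<bullet> y + z \<bullet> z" by (simp add: yz(3) inner_add_right)
  also have "z \<bullet> y = 0" using yz(2)[OF yz(1)] by (simp add: orthogonal_def)
  finally have "z$k \<noteq> 0" using \<open>z \<noteq> 0\<close> by simp
  moreover have "\<forall>w\<in>W. z \<bullet> w = 0" using yz(2) span_W by (simp add: orthogonal_def)
  ultimately show ?thesis by blast
qed

text \<open>By induction over S: if n works for S and g for a new coordinate k, then n + c g
  works for S \<union> {k} for all but the finitely many c making some coordinate vanish.\<close>
lemma orthogonal_vector_nonzero_coordinates:
  fixes W :: "(real^'n) set"
  assumes "subspace W" and "\<forall>k\<in>S. axis k 1 \<notin> W"
  shows "\<exists>n. (\<forall>w\<in>W. n \<bullet> w = 0) \<and> (\<forall>i\<in>S. n$i \<noteq> 0)"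
  using finite[of S] assms(2)
proof (induction S rule: finite_induct)
  case empty then show ?case by (intro exI[of _ 0]) simp
next
  case (insert k S)
  then obtain n where n: "\<forall>w\<in>W. n \<bullet> w = 0" "\<forall>i\<in>S. n$i \<noteq> 0" by auto
  have "axis k 1 \<notin> W" using insert.prems by simp
  then obtain g where g: "\<forall>w\<in>W. g \<bullet> w = 0" "g$k \<noteq> 0"
    using orthogonal_vector_with_coordinate[OF assms(1)] by metis
  define bad where "bad = (\<lambda>i. - (n$i) / (g$i)) ` {i \<in> insert k S. g$i \<noteq> 0}"
  have "finite bad" unfolding bad_def by simp
  then obtain c :: real where c: "c \<notin> bad"
    using ex_new_if_finite infinite_UNIV_char_0 by blast
  show ?case
  proof (intro exI[of _ "n + c *\<^sub>R g"] conjI ballI)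
    fix w assume "w \<in> W" then show "(n + c *\<^sub>R g) \<bullet> w = 0" using n g by (simp add: inner_add_left)
  next
    fix i assume i: "i \<in> insert k S"
    show "(n + c *\<^sub>R g)$i \<noteq> 0"
    proof (cases "g$i = 0")
      case True
      then show ?thesis using i g(2) n(2) by auto
    next
      case False
      then have "c \<noteq> - (n$i) / (g$i)" using c i unfolding bad_def by auto
      then show ?thesis using False by (simp add: field_simps)
    qed
  qed
qed

section \<open>The sign cone\<close>

definition sign_cone :: "'n set \<Rightarrow> ('n \<Rightarrow> real) \<Rightarrow> (real^'n) set" where
  "sign_cone R s = {u \<in> sphere 0 1. \<forall>i. (i \<notin> R \<longrightarrow> u$i = 0) \<and> (i \<in> R \<longrightarrow> 0 \<le> s i * u$i)}"

lemma compact_sign_cone: "compact (sign_cone R s)"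
proof -
  have "sign_cone R s = sphere 0 1 \<inter> {u. \<forall>i. (i \<notin> R \<longrightarrow> u$i = 0) \<and> (i \<in> R \<longrightarrow> 0 \<le> s i * u$i)}"
    unfolding sign_cone_def by blast
  also have "compact \<dots>"
    by (intro compact_Int_closed compact_sphere closed_Collect_all closed_Collect_imp closed_Collect_conj
        closed_Collect_eq closed_Collect_le continuous_intros) auto
  finally show ?thesis .
qed

text \<open>If every coordinate n_i (i \<in> R) has the sign s_i, then n has positive inner product
  with every vector of the sign cone, so the cone misses every subspace orthogonal to n.\<close>
lemma sign_cone_disjoint_orthogonal:
  assumes orth: "\<forall>w\<in>W. n \<bullet> w = 0" and signs: "\<forall>i\<in>R. 0 < s i * n$i"
  shows "sign_cone R s \<inter> W = {}"
proof -
  have "0 < n \<bullet> u" if u: "u \<in> sign_cone R s" for u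
  proof -
    have term_nonneg: "0 \<le> n$i * u$i" for i
    proof (cases "i \<in> R")
      case True
      then have "0 < s i * n$i" "0 \<le> s i * u$i" using signs u by (auto simp: sign_cone_def)
      then show ?thesis by (smt (verit) mult_nonneg_nonneg mult_neg_neg zero_less_mult_iff zero_le_mult_iff)
    qed (use u in \<open>auto simp: sign_cone_def\<close>)
    have "u \<noteq> 0" using u by (auto simp: sign_cone_def)
    then obtain j where j: "u$j \<noteq> 0" by (auto simp: vec_eq_iff)
    then have "j \<in> R" using u by (auto simp: sign_cone_def)
    then have "0 < s j * n$j" "0 \<le> s j * u$j" using signs u by (auto simp: sign_cone_def)
    then have "0 < n$j * u$j" using j by (smt (verit) mult_pos_pos mult_neg_neg zero_less_mult_iff zero_le_mult_iff)
    then have "0 < (\<Sum>i\<in>UNIV. n$i * u$i)" by (intro sum_pos2[where i=j]) (auto intro: term_nonneg)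
    then show ?thesis by (simp add: inner_vec_def)
  qed
  then show ?thesis using orth by force
qed

lemma sign_vectors_in_sign_cone:
  assumes signs: "\<forall>i\<in>R. s i = 1 \<or> s i = -1"
    and v: "v \<in> {(\<chi> i. if i \<in> R then s i * a i else 0) | a. (\<forall>i\<in>R. a i \<ge> 0) \<and> (\<Sum>i\<in>R. (a i)^2) = 1}"
  shows "v \<in> sign_cone R s"
proof -
  obtain a where a: "v = (\<chi> i. if i \<in> R then s i * a i else 0)" "\<forall>i\<in>R. a i \<ge> 0" "(\<Sum>i\<in>R. (a i)^2) = 1"
    using v by blast
  have s_sq: "s i * s i = 1" if "i \<in> R" for i using signs that by auto
  have "v \<bullet> v = (\<Sum>i\<in>UNIV. if i \<in> R then (a i)^2 else 0)"
    unfolding inner_vec_def a(1) by (intro sum.cong refl) (auto simp: power2_eq_square s_sq algebra_simps)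
  also have "\<dots> = 1" using a(3) by (simp add: sum.If_cases)
  finally have "norm v = 1" by (simp add: norm_eq_1)
  moreover have "0 \<le> s i * v$i" if "i \<in> R" for i
    using a that s_sq[OF that] by (simp add: mult.assoc[symmetric])
  ultimately show ?thesis unfolding sign_cone_def using a(1) by auto
qed

theorem mainTheorem6:
  fixes M :: "(real^'n) set" and R :: "'n set"
  assumes "M \<subseteq> torus_dom" and "M \<in> sets lebesgue"
    and "0 < measure lebesgue M" and "measure lebesgue M < (2*pi) ^ CARD('n)"
    and "R \<noteq> {}"
    and "\<forall>i\<in>R. relevant_dir M (axis i 1)"
    and "\<forall>i. i \<notin> R \<longrightarrow> irrelevant_dir M (axis i 1)"
  shows "\<exists>s :: 'n \<Rightarrow> real. (\<forall>i\<in>R. s i = 1 \<or> s i = -1) \<and>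
    (\<exists>\<sigma>>0. \<exists>\<epsilon>>0.
      (let V = {(\<chi> i. if i \<in> R then s i * a i else 0) | a.
                  (\<forall>i\<in>R. a i \<ge> 0) \<and> (\<Sum>i\<in>R. (a i)^2) = 1}
       in (\<forall>v\<in>V. relevant_dir M v) \<and>
          (\<forall>v. v \<noteq> 0 \<and> v /\<^sub>R norm v \<in> V \<and> norm v < \<epsilon> \<longrightarrow>
               Lambda M v \<ge> \<sigma> * norm v)))"
proof -
  interpret \<Lambda>: subadditive_gauge "Lambda M"
    using assms(1,2) by (rule Lambda_subadditive_gauge)
  have relevant_iff: "relevant_dir M a \<longleftrightarrow> a \<notin> \<Lambda>.null_dirs" for a
    unfolding relevant_dir_def irrelevant_dir_def \<Lambda>.null_dirs_def by simp
  obtain n where n: "\<forall>w\<in>\<Lambda>.null_dirs. n \<bullet> w = 0" "\<forall>i\<in>R. n$i \<noteq> 0"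
    using orthogonal_vector_nonzero_coordinates[OF \<Lambda>.subspace_null_dirs] assms(6) relevant_iff by blast
  define s where "s i = sgn (n$i)" for i
  have signs: "\<forall>i\<in>R. s i = 1 \<or> s i = -1" using n(2) by (auto simp: s_def sgn_real_def)
  have "\<forall>i\<in>R. 0 < s i * n$i" using n(2) by (auto simp: s_def sgn_real_def)
  then have disjoint: "sign_cone R s \<inter> \<Lambda>.null_dirs = {}"
    using n(1) by (rule sign_cone_disjoint_orthogonal[rotated])
  obtain \<sigma> \<epsilon> where \<sigma>\<epsilon>: "\<sigma> > 0" "\<epsilon> > 0"
    "\<forall>v. v \<noteq> 0 \<and> v /\<^sub>R norm v \<in> sign_cone R s \<and> norm v < \<epsilon> \<longrightarrow> \<sigma> * norm v \<le> Lambda M v"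
    using \<Lambda>.uniform_linear_lower_bound[OF compact_sign_cone disjoint] by blast
  let ?V = "{(\<chi> i. if i \<in> R then s i * a i else 0) | a. (\<forall>i\<in>R. a i \<ge> 0) \<and> (\<Sum>i\<in>R. (a i)^2) = 1}"
  have "?V \<subseteq> sign_cone R s" using sign_vectors_in_sign_cone[OF signs] by blast
  then have "(\<forall>v\<in>?V. relevant_dir M v) \<and>
      (\<forall>v. v \<noteq> 0 \<and> v /\<^sub>R norm v \<in> ?V \<and> norm v < \<epsilon> \<longrightarrow> Lambda M v \<ge> \<sigma> * norm v)"
    using disjoint \<sigma>\<epsilon>(3) unfolding relevant_iff by blast
  then show ?thesis using signs \<sigma>\<epsilon>(1,2) unfolding Let_def by blast
qed

end
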